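(* Let $\Omega\subset\mathbb{R}^2$ be compact with non-empty interior and let $G=\frac{1}{\mathrm{Area}(\Omega)}\int_\Omega y\,dy$ be its barycenter. Then for every $\varepsilon>0$ there exists $H>0$ such that for every $h\ge H$, every solid angle center of $\Omega$ of height $h$ lies at distance less than $\varepsilon$ from $G$. In other words, solid angle centers of height $h$ converge to the barycenter of $\Omega$ as $h\to+\infty$.
   Context: For a compact $\Omega\subset\mathbb{R}^2$ with non-empty interior, $h>0$ and $x\in\mathbb{R}^2$, $A_\Omega^{(h)}(x)=\int_\Omega \frac{h}{(|y-x|^2+h^2)^{3/2}}\,dy$. A point $x$ is a solid angle center of $\Omega$ of height $h$ if it maximizes $A_\Omega^{(h)}$ over $\mathbb{R}^2$. $\mathrm{Area}$ denotes Lebesgue measure. *)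

theory Defs
  imports "HOL-Analysis.Analysis"
begin

definition solid_angle :: "(real^2) set \<Rightarrow> real \<Rightarrow> real^2 \<Rightarrow> real" where
  "solid_angle \<Omega> h x =
     (LINT y:\<Omega>|lebesgue. h / ((norm (y - x))\<^sup>2 + h\<^sup>2) powr (3/2))"

definition solid_angle_center :: "(real^2) set \<Rightarrow> real \<Rightarrow> real^2 \<Rightarrow> bool" where
  "solid_angle_center \<Omega> h x \<longleftrightarrow> (\<forall>z. solid_angle \<Omega> h z \<le> solid_angle \<Omega> h x)"

definition barycenter :: "(real^2) set \<Rightarrow> real^2" where
  "barycenter \<Omega> = (1 / measure lebesgue \<Omega>) *\<^sub>R (LINT y:\<Omega>|lebesgue. y)"

end

theory Submission
  imports Defs
begin

(* Write the solid angle as an integral of the radial kernel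
   k_h(a) = h / (a + h^2)^(3/2), a the squared distance.  Taylor expansion in a/h^2 gives
     1/h^2 - 3a/(2h^4)  <=  k_h(a)  <=  1/h^2 - 3a/(2h^4) + 15a^2/(8h^6),
   and for points far from \<Omega> a cruder upper bound suffices.  Let G be the barycenter and
   R a bound for |y - G| on \<Omega>.  If |x - G| >= \<epsilon> and h is large, these bounds show that the
   difference  k_h(|y-G|^2) - k_h(|y-x|^2)  dominates, for all y in \<Omega>, an affine function
   c + (y - G).w  with c > 0.  Integrating over \<Omega>, the linear part vanishes because G is the
   barycenter, so the solid angle at G strictly exceeds the one at x, and x is no
   solid angle center. *)

definition sa_kernel :: "real \<Rightarrow> real \<Rightarrow> real" where
  "sa_kernel h a = h / (a + h\<^sup>2) powr (3/2)"

lemma solid_angle_as_kernel: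
  "solid_angle \<Omega> h x = (LINT y:\<Omega>|lebesgue. sa_kernel h ((norm (y - x))\<^sup>2))"
  by (simp add: solid_angle_def sa_kernel_def)

text \<open>With s = sqrt (a + h^2) the kernel is the rational expression h / s^3;
  all bounds below are polynomial inequalities in s and h.\<close>
lemma sa_kernel_root_form:
  fixes h a :: real assumes h: "h > 0" and a: "a \<ge> 0"
  obtains s where "s \<ge> h" "s\<^sup>2 = a + h\<^sup>2" "sa_kernel h a = h / s^3"
proof
  define s where "s = sqrt (a + h\<^sup>2)"
  have pos: "a + h\<^sup>2 > 0" using h a by (simp add: add_nonneg_pos)
  show s2: "s\<^sup>2 = a + h\<^sup>2" unfolding s_def using pos by simp
  show "s \<ge> h" unfolding s_def using a h by (simp add: real_le_rsqrt)
  have "(a + h\<^sup>2) powr (3/2) = (a + h\<^sup>2) * (a + h\<^sup>2) powr (1/2)"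
    using powr_add[of "a + h\<^sup>2" 1 "1/2"] pos by simp
  also have "\<dots> = s^3"
    using pos s2 by (simp add: s_def powr_half_sqrt power3_eq_cube power2_eq_square)
  finally show "sa_kernel h a = h / s^3" by (simp add: sa_kernel_def)
qed

text \<open>First-order lower bound (the kernel is convex in a).\<close>
lemma sa_kernel_lower:
  fixes h a :: real assumes h: "h > 0" and a: "a \<ge> 0"
  shows "1/h^2 - 3/2 * a / h^4 \<le> sa_kernel h a"
proof -
  obtain s where sh: "s \<ge> h" and s2: "s\<^sup>2 = a + h\<^sup>2" and k: "sa_kernel h a = h / s^3"
    using sa_kernel_root_form[OF h a] by blast
  have spos: "s > 0" using sh h by simp
  have lhs: "1/h^2 - 3/2 * a / h^4 = (5/2*h^2 - 3/2* s^2) / h^4"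
    using h s2 by (simp add: field_simps power4_eq_xxxx power2_eq_square)
  have "h^5 - (5/2*h^2 - 3/2* s^2) * s^3 = (s-h)^2 * (3* s^3 + 6* s^2*h + 4* s*h^2 + 2*h^3) / 2"
    by algebra
  moreover have "0 \<le> (s-h)^2 * (3* s^3 + 6* s^2*h + 4* s*h^2 + 2*h^3)"
    using spos h by (intro mult_nonneg_nonneg) auto
  ultimately have "(5/2*h^2 - 3/2* s^2) * s^3 \<le> h^5" by simp
  then have "5/2*h^2 - 3/2* s^2 \<le> (h / s^3) * h^4"
    using spos by (simp add: pos_le_divide_eq power_Suc[symmetric] del: power_Suc)
  then show ?thesis using h unfolding lhs k by (simp add: pos_divide_le_eq)
qed

lemma sa_kernel_upper:
  fixes h a :: real assumes h: "h > 0" and a: "a \<ge> 0"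
  shows "sa_kernel h a \<le> 1/h^2 - 3/2 * a / h^4 + 15/8 * a^2 / h^6"
proof -
  obtain s where sh: "s \<ge> h" and s2: "s\<^sup>2 = a + h\<^sup>2" and k: "sa_kernel h a = h / s^3"
    using sa_kernel_root_form[OF h a] by blast
  have spos: "s > 0" using sh h by simp
  have aeq: "a = s^2 - h^2" using s2 by simp
  have rhs: "1/h^2 - 3/2 * a / h^4 + 15/8 * a^2 / h^6
      = (35*h^4 - 42* s^2*h^2 + 15* s^4) / (8*h^6)"
    using h unfolding aeq by (simp add: field_simps, algebra)
  have "(35*h^4 - 42* s^2*h^2 + 15* s^4) * s^3 - 8*h^7
      = (s-h)^3 * (15* s^4 + 45* s^3*h + 48* s^2*h^2 + 24* s*h^3 + 8*h^4)"
    by algebra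
  moreover have "0 \<le> (s-h)^3 * (15* s^4 + 45* s^3*h + 48* s^2*h^2 + 24* s*h^3 + 8*h^4)"
    using spos h sh by (intro mult_nonneg_nonneg) auto
  ultimately have "8*h^7 \<le> (35*h^4 - 42* s^2*h^2 + 15* s^4) * s^3" by simp
  moreover have "(h / s^3) * (8*h^6) = (8*h^7) / s^3"
    by (simp add: power_Suc[symmetric] del: power_Suc)
  ultimately have "(h / s^3) * (8*h^6) \<le> 35*h^4 - 42* s^2*h^2 + 15* s^4"
    using spos by (simp add: pos_divide_le_eq)
  then show ?thesis using h unfolding rhs k by (simp add: pos_le_divide_eq)
qed

text \<open>Crude upper bound at squared distances a >= 4R^2 when h >= 2R: there the kernel
  stays below the lower bound of sa_kernel_lower at distance R by a margin R^2/(2h^4).\<close>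
lemma sa_kernel_far:
  fixes h a R :: real assumes h: "h > 0" and a: "4*R^2 \<le> a" and hR: "4*R^2 \<le> h^2"
  shows "sa_kernel h a \<le> 1/h^2 - 2*R^2 / h^4"
proof -
  have a0: "a \<ge> 0" using a zero_le_power2[of R] by linarith
  obtain s where sh: "s \<ge> h" and s2: "s\<^sup>2 = a + h\<^sup>2" and k: "sa_kernel h a = h / s^3"
    using sa_kernel_root_form[OF h a0] by blast
  have p: "0 < 4*R^2 + h^2" using h by (simp add: add_nonneg_pos)
  have "h / s^3 \<le> 1 / s^2"
    using sh h by (simp add: field_simps power2_eq_square power3_eq_cube mult_right_mono)
  also have "\<dots> = 1/(a + h^2)" using s2 by simp
  also have "\<dots> \<le> 1/(4*R^2 + h^2)"
    using p a by (intro divide_left_mono) auto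
  also have "\<dots> \<le> 1/h^2 - 2*R^2 / h^4"
  proof -
    have "(4*R^2 + h^2) * (h^2 - 2*R^2) - h^4 = 2*R^2*(h^2 - 4*R^2)" by algebra
    moreover have "0 \<le> 2*R^2*(h^2 - 4*R^2)" using hR by simp
    ultimately have "h^4 \<le> (4*R^2 + h^2) * (h^2 - 2*R^2)" by linarith
    then show ?thesis using p h by (simp add: field_simps power4_eq_xxxx power2_eq_square)
  qed
  finally show ?thesis by (simp only: k)
qed

lemma kernel_gain_far:
  fixes x y G :: "'a::real_normed_vector" and h R :: real
  assumes h: "h > 0" and R: "R > 0" and hR: "2*R \<le> h"
    and yG: "norm (y - G) \<le> R" and xG: "3*R \<le> norm (x - G)"
  shows "R^2 / (2*h^4) \<le> sa_kernel h ((norm (y - G))\<^sup>2) - sa_kernel h ((norm (y - x))\<^sup>2)"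
proof -
  have "(norm (y - G))\<^sup>2 \<le> R^2" using yG by (intro power_mono) auto
  then have "1/h^2 - 3/2 * R^2 / h^4 \<le> 1/h^2 - 3/2 * (norm (y - G))\<^sup>2 / h^4"
    using h by (simp add: divide_right_mono)
  also have "\<dots> \<le> sa_kernel h ((norm (y - G))\<^sup>2)" by (rule sa_kernel_lower[OF h]) simp
  finally have lo: "1/h^2 - 3/2 * R^2 / h^4 \<le> sa_kernel h ((norm (y - G))\<^sup>2)" .
  have "norm (x - G) \<le> norm (y - x) + norm (y - G)"
    using norm_triangle_ineq4[of "y - G" "y - x"] by (simp add: norm_minus_commute)
  then have "2*R \<le> norm (y - x)" using yG xG by simp
  then have "(2*R)^2 \<le> (norm (y - x))\<^sup>2" using R by (intro power_mono) auto
  moreover have "(2*R)^2 \<le> h^2" using hR R by (intro power_mono) auto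
  ultimately have up: "sa_kernel h ((norm (y - x))\<^sup>2) \<le> 1/h^2 - 2*R^2 / h^4"
    by (intro sa_kernel_far[OF h]) (simp_all add: power_mult_distrib)
  show ?thesis using lo up by (simp add: field_simps)
qed

lemma kernel_gain_near:
  fixes x y G :: "'a::real_inner" and h R :: real
  assumes h: "h > 0" and yG: "norm (y - G) \<le> R" and xG: "norm (x - G) \<le> 3*R"
  shows "3/(2*h^4) * (norm (x - G))\<^sup>2 - 480*R^4/h^6 + (y - G) \<bullet> ((3/h^4) *\<^sub>R (G - x))
           \<le> sa_kernel h ((norm (y - G))\<^sup>2) - sa_kernel h ((norm (y - x))\<^sup>2)"
proof -
  have lo: "1/h^2 - 3/2 * (norm (y - G))\<^sup>2 / h^4 \<le> sa_kernel h ((norm (y - G))\<^sup>2)"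
    by (rule sa_kernel_lower[OF h]) simp
  have up: "sa_kernel h ((norm (y - x))\<^sup>2)
      \<le> 1/h^2 - 3/2 * (norm (y - x))\<^sup>2 / h^4 + 15/8 * ((norm (y - x))\<^sup>2)^2 / h^6"
    by (rule sa_kernel_upper[OF h]) simp
  have "norm (y - x) \<le> norm (y - G) + norm (x - G)"
    using norm_triangle_ineq4[of "y - G" "x - G"] by simp
  then have "norm (y - x) \<le> 4*R" using yG xG by simp
  then have "((norm (y - x))\<^sup>2)^2 \<le> ((4*R)^2)^2" by (intro power_mono) auto
  then have "15/8 * ((norm (y - x))\<^sup>2)^2 \<le> 480*R^4" by (simp add: power_mult_distrib)
  then have err: "15/8 * ((norm (y - x))\<^sup>2)^2 / h^6 \<le> 480*R^4/h^6"
    using h by (intro divide_right_mono) auto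
  have "y - x = (y - G) + (G - x)" by simp
  then have expand: "(norm (y - x))\<^sup>2
      = (norm (y - G))\<^sup>2 + 2 * ((y - G) \<bullet> (G - x)) + (norm (x - G))\<^sup>2"
    by (simp only: power2_norm_eq_inner inner_add_left inner_add_right)
       (simp add: inner_commute inner_diff_left inner_diff_right)
  have "3/(2*h^4) * (norm (x - G))\<^sup>2 - 480*R^4/h^6 + (y - G) \<bullet> ((3/h^4) *\<^sub>R (G - x))
      = 3/2 * (norm (y - x))\<^sup>2 / h^4 - 3/2 * (norm (y - G))\<^sup>2 / h^4 - 480*R^4/h^6"
    using h unfolding expand by (simp only: inner_scaleR_right) (simp add: field_simps)
  then show ?thesis using lo up err by linarith
qed

lemma kernel_gain:
  fixes x G :: "'a::real_inner" and h R \<epsilon> :: real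
  assumes R: "R > 0" and hR: "2*R \<le> h" and h\<epsilon>: "40*R^2 \<le> h*\<epsilon>" and xG: "\<epsilon> \<le> norm (x - G)"
  obtains c w where "c > 0"
    "\<And>y. norm (y - G) \<le> R \<Longrightarrow>
       c + (y - G) \<bullet> w \<le> sa_kernel h ((norm (y - G))\<^sup>2) - sa_kernel h ((norm (y - x))\<^sup>2)"
proof -
  have h: "h > 0" using R hR by simp
  show ?thesis
  proof (cases "3*R \<le> norm (x - G)")
    case True
    show ?thesis
      by (rule that[of "R^2 / (2*h^4)" 0]) (use R h True kernel_gain_far[OF h R hR] in auto)
  next
    case False
    have "(40*R^2)^2 \<le> (h * norm (x - G))^2"
      using h\<epsilon> xG h R by (intro power_mono) (auto intro: order_trans mult_left_mono)
    then have "1600*R^4 \<le> h^2 * (norm (x - G))^2" by (simp add: power_mult_distrib)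
    moreover have "0 < R^4" using R by simp
    moreover have "(norm (x - G))^2 * h^2 = h^2 * (norm (x - G))^2" by simp
    ultimately have "0 < 3/2 * (norm (x - G))^2 * h^2 - 480*R^4" by linarith
    then have "0 < (3/2 * (norm (x - G))^2 * h^2 - 480*R^4) / h^6" using h by simp
    also have "\<dots> = 3/(2*h^4) * (norm (x - G))\<^sup>2 - 480*R^4/h^6"
      using h by (simp add: field_simps)
    finally have pos: "0 < 3/(2*h^4) * (norm (x - G))\<^sup>2 - 480*R^4/h^6" .
    show ?thesis
      by (rule that[OF pos, of "(3/h^4) *\<^sub>R (G - x)"])
         (use kernel_gain_near[OF h, of _ G R x] False in auto)
  qed
qed

lemma continuous_set_integrable:
  fixes f :: "'a::euclidean_space \<Rightarrow> 'b::euclidean_space"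
  assumes S: "compact S" and f: "continuous_on UNIV f"
  shows "set_integrable lebesgue S f"
proof -
  obtain a where a: "S \<subseteq> cbox (-a) a"
    using bounded_subset_cbox_symmetric[OF compact_imp_bounded[OF S]] by blast
  have "f absolutely_integrable_on cbox (-a) a"
    by (rule absolutely_integrable_continuous) (use f continuous_on_subset in blast)
  moreover have "S \<in> sets lebesgue" using lmeasurable_compact[OF S] by (simp add: fmeasurableD)
  ultimately show ?thesis using a by (rule set_integrable_subset)
qed

text \<open>A set with an interior point contains a ball, hence has positive area; this makes
  the barycenter meaningful.\<close>
lemma measure_pos_of_interior:
  fixes S :: "'a::euclidean_space set"
  assumes "compact S" and "interior S \<noteq> {}"
  shows "measure lebesgue S > 0"
proof -
  obtain c r where r: "r > 0" "ball c r \<subseteq> S"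
    using assms(2) mem_interior by blast
  have "0 < measure lborel (ball c r)" using content_ball_pos[OF r(1)] .
  also have "\<dots> = measure lebesgue (ball c r)" by (simp add: measure_completion)
  also have "\<dots> \<le> measure lebesgue S"
    using r(2) lmeasurable_compact[OF assms(1)] by (intro measure_mono_fmeasurable) auto
  finally show ?thesis .
qed

text \<open>The defining property of the barycenter: an affine function c + (y - G).w has
  integral Area * c over the set, since the linear part has mean zero.\<close>
lemma set_integral_affine_barycenter:
  fixes \<Omega> :: "(real^2) set"
  assumes cpt: "compact \<Omega>" and m: "measure lebesgue \<Omega> > 0"
  shows "(LINT y:\<Omega>|lebesgue. c + (y - barycenter \<Omega>) \<bullet> w) = measure lebesgue \<Omega> * c"
proof -
  define G where "G = barycenter \<Omega>"
  have lm: "\<Omega> \<in> lmeasurable" using lmeasurable_compact[OF cpt] .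
  then have sets: "\<Omega> \<in> sets lebesgue" and fin: "emeasure lebesgue \<Omega> \<noteq> \<infinity>"
    by (auto simp: fmeasurable_def)
  have int: "set_integrable lebesgue \<Omega> f" if "continuous_on UNIV f" for f :: "real^2 \<Rightarrow> real^2"
    using continuous_set_integrable[OF cpt that] .
  have const: "(LINT y:\<Omega>|lebesgue. v) = measure lebesgue \<Omega> *\<^sub>R v" for v :: "'b::euclidean_space"
    using set_integral_const[OF sets fin] .
  have "(LINT y:\<Omega>|lebesgue. y - G) = (LINT y:\<Omega>|lebesgue. y) - (LINT y:\<Omega>|lebesgue. G)"
    by (rule set_integral_diff(2)) (intro int continuous_intros)+
  also have "\<dots> = 0"
    using m unfolding const G_def barycenter_def by simp
  finally have mean0: "(LINT y:\<Omega>|lebesgue. y - G) = 0" .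
  have "set_integrable lebesgue \<Omega> (\<lambda>y. y - G)" by (intro int continuous_intros)
  then have "(LINT y:\<Omega>|lebesgue. (y - G) \<bullet> w) = (LINT y:\<Omega>|lebesgue. y - G) \<bullet> w"
    unfolding set_lebesgue_integral_def set_integrable_def
    by (subst integral_inner_left[symmetric]) (auto simp: inner_scaleR_left)
  then have lin0: "(LINT y:\<Omega>|lebesgue. (y - G) \<bullet> w) = 0" using mean0 by simp
  have "(LINT y:\<Omega>|lebesgue. c + (y - G) \<bullet> w)
      = (LINT y:\<Omega>|lebesgue. c) + (LINT y:\<Omega>|lebesgue. (y - G) \<bullet> w)"
    by (intro set_integral_add(2) continuous_set_integrable[OF cpt] continuous_intros)
  also have "\<dots> = measure lebesgue \<Omega> * c" using lin0 const[of c] by simp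
  finally show ?thesis by (simp add: G_def)
qed

lemma solid_angle_barycenter_larger:
  fixes \<Omega> :: "(real^2) set" and x :: "real^2" and h R \<epsilon> :: real
  assumes cpt: "compact \<Omega>" and m: "measure lebesgue \<Omega> > 0"
    and R: "R > 0" and bound: "\<And>y. y \<in> \<Omega> \<Longrightarrow> norm (y - barycenter \<Omega>) \<le> R"
    and hR: "2*R \<le> h" and h\<epsilon>: "40*R^2 \<le> h*\<epsilon>" and xG: "\<epsilon> \<le> dist x (barycenter \<Omega>)"
  shows "solid_angle \<Omega> h x < solid_angle \<Omega> h (barycenter \<Omega>)"
proof -
  define G where "G = barycenter \<Omega>"
  define gain where "gain y = sa_kernel h ((norm (y - G))\<^sup>2) - sa_kernel h ((norm (y - x))\<^sup>2)" for y
  have h: "h > 0" using R hR by simp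
  obtain c w where c: "c > 0"
    and pointwise: "\<And>y. norm (y - G) \<le> R \<Longrightarrow> c + (y - G) \<bullet> w \<le> gain y"
    using kernel_gain[OF R hR h\<epsilon>, of x G] xG unfolding G_def gain_def by (auto simp: dist_norm)
  have kernel_int: "set_integrable lebesgue \<Omega> (\<lambda>y. sa_kernel h ((norm (y - z))\<^sup>2))" for z
  proof -
    have "\<And>y. (norm (y - z))\<^sup>2 + h\<^sup>2 > 0" using h by (simp add: add_nonneg_pos)
    then show ?thesis unfolding sa_kernel_def
      by (intro continuous_set_integrable[OF cpt] continuous_intros)
         (use h in \<open>auto simp: less_imp_neq[symmetric]\<close>)
  qed
  have "0 < measure lebesgue \<Omega> * c" using m c by simp
  also have "\<dots> = (LINT y:\<Omega>|lebesgue. c + (y - G) \<bullet> w)"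
    using set_integral_affine_barycenter[OF cpt m] unfolding G_def by simp
  also have "\<dots> \<le> (LINT y:\<Omega>|lebesgue. gain y)"
    using pointwise bound unfolding gain_def G_def
    by (intro set_integral_mono set_integral_diff(1) kernel_int
              continuous_set_integrable[OF cpt] continuous_intros) auto
  also have "\<dots> = solid_angle \<Omega> h G - solid_angle \<Omega> h x"
    unfolding gain_def solid_angle_as_kernel by (rule set_integral_diff(2)[OF kernel_int kernel_int])
  finally show ?thesis unfolding G_def by simp
qed

theorem theorem3p2:
  fixes \<Omega> :: "(real^2) set"
  assumes "compact \<Omega>" and "interior \<Omega> \<noteq> {}"
  shows "\<forall>\<epsilon>>0. \<exists>H>0. \<forall>h\<ge>H. \<forall>x. solid_angle_center \<Omega> h x \<longrightarrow>
           dist x (barycenter \<Omega>) < \<epsilon>"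
proof (intro allI impI)
  fix \<epsilon> :: real assume \<epsilon>: "\<epsilon> > 0"
  have m: "measure lebesgue \<Omega> > 0" using measure_pos_of_interior[OF assms] .
  obtain R where R: "R > 0" and bound: "\<And>y. y \<in> \<Omega> \<Longrightarrow> norm (y - barycenter \<Omega>) \<le> R"
    using compact_imp_bounded[OF compact_translation[OF assms(1), of "- barycenter \<Omega>"]]
    unfolding bounded_pos by auto
  define H where "H = 2*R + 40*R^2/\<epsilon>"
  show "\<exists>H>0. \<forall>h\<ge>H. \<forall>x. solid_angle_center \<Omega> h x \<longrightarrow> dist x (barycenter \<Omega>) < \<epsilon>"
  proof (intro exI[of _ H] conjI allI impI)
    show "H > 0" unfolding H_def using R \<epsilon> by (simp add: add_pos_nonneg)
    fix h x assume hH: "H \<le> h" and center: "solid_angle_center \<Omega> h x"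
    have "0 \<le> 40*R^2/\<epsilon>" using \<epsilon> by simp
    then have hR: "2*R \<le> h" and "40*R^2/\<epsilon> \<le> h" using hH R unfolding H_def by linarith+
    then have h\<epsilon>: "40*R^2 \<le> h*\<epsilon>" using \<epsilon> by (simp add: pos_divide_le_eq)
    show "dist x (barycenter \<Omega>) < \<epsilon>"
      using solid_angle_barycenter_larger[OF assms(1) m R bound hR h\<epsilon>] center
      unfolding solid_angle_center_def by (meson not_le)
  qed
qed

end
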